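(* Suppose $k,K,A,B,n$ are natural numbers such that $\mathrm{LT}(K,n)\leq A$ and $\mathrm{LCS}_2(K,\mathcal P_k)\leq B$. Then $\mathrm{LT}(k,kn)\leq(2n-1)B+kA$.
   Context: $[k]=\{1,\dots,k\}$. Two subsequences of a word $w$ are twins if they are equal as words and use disjoint sets of positions of $w$; $\mathrm{LT}(w)$ is the maximum length of twins in $w$, and $\mathrm{LT}(k,n)=\min_{w\in[k]^n}\mathrm{LT}(w)$. $\mathcal{P}_k$ is the set of permutations on $k$ letters (words over $[k]$ with each letter exactly once). $\mathrm{LCS}(w,w')$ is the length of a longest common subsequence of $w,w'$; $\mathrm{LCS}_2(K,\mathcal P_k)$ is the minimum, over sets of $K$ distinct permutations in $\mathcal P_k$, of the maximum $\mathrm{LCS}$ of two distinct members. *)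

theory Defs
  imports Main "HOL-Library.Sublist" "HOL-Library.Extended_Nat"
begin

definition words :: "nat \<Rightarrow> nat \<Rightarrow> nat list set" where
  "words k n = {w. length w = n \<and> set w \<subseteq> {1..k}}"

definition twins :: "'a list \<Rightarrow> nat set \<Rightarrow> nat set \<Rightarrow> bool" where
  "twins w I J \<longleftrightarrow> I \<subseteq> {..<length w} \<and> J \<subseteq> {..<length w} \<and> I \<inter> J = {}
     \<and> nths w I = nths w J"

definition LT_word :: "'a list \<Rightarrow> nat" where
  "LT_word w = Max {card I | I J. twins w I J}"

text \<open>LT(k,n) = min over words in [k]^n (infinity if there are no such words).\<close>
definition LT :: "nat \<Rightarrow> nat \<Rightarrow> enat" where
  "LT k n = Inf ((\<lambda>w. enat (LT_word w)) ` words k n)"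

definition perms :: "nat \<Rightarrow> nat list set" where
  "perms k = {p. distinct p \<and> set p = {1..k}}"

definition LCS :: "'a list \<Rightarrow> 'a list \<Rightarrow> nat" where
  "LCS w w' = Max {length u | u. subseq u w \<and> subseq u w'}"

text \<open>LCS_2(K,P_k): min over K-element sets of permutations of the max LCS of two distinct
  members (infinity if no such set exists; the inner maximum over an empty set of pairs is 0).\<close>
definition LCS2 :: "nat \<Rightarrow> nat \<Rightarrow> enat" where
  "LCS2 K k = Inf {Sup {enat (LCS p q) | p q. p \<in> S \<and> q \<in> S \<and> p \<noteq> q}
                   | S. S \<subseteq> perms k \<and> card S = K}"

end

theory Submission
  imports Defs
begin

text \<open>Take \<open>u \<in> [K]\<^sup>n\<close> with \<open>LT(u) \<le> A\<close> and permutations \<open>P\<^sub>1, \<dots>, P\<^sub>K\<close> of \<open>[k]\<close> with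
  pairwise \<open>LCS \<le> B\<close>, and replace every letter \<open>i\<close> of \<open>u\<close> by the block \<open>P\<^sub>i\<close>. Match the
  \<open>t\<close>-th positions of two twins in the resulting word and look at the blocks containing them.
  If the two blocks carry different letters of \<open>u\<close>, the matches inside a fixed pair of blocks
  spell a common subsequence of two distinct permutations, so there are at most \<open>B\<close> of them;
  as both block indices are monotone in \<open>t\<close>, at most \<open>2n - 1\<close> block pairs occur. If the two
  blocks carry the same letter of \<open>u\<close>, then for each of the \<open>k\<close> letters of \<open>[k]\<close> the matches
  spelling it use each block at most once on either side and hence form twins in \<open>u\<close>, giving at
  most \<open>kA\<close> such matches.\<close>

lemma nths_eq_map_nth:
  assumes "sorted_wrt (<) is" and "\<forall>i\<in>set is. i < length xs"
  shows "nths xs (set is) = map (nth xs) is"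
  using assms
proof (induction xs arbitrary: "is")
  case Nil
  then show ?case by (cases "is") auto
next
  case (Cons x xs)
  define js where "js = map (\<lambda>i. i - 1) (filter (\<lambda>i. i \<noteq> 0) is)"
  have set_js: "{j. Suc j \<in> set is} = set js"
    unfolding js_def by (force simp: image_iff)
  have "sorted_wrt (<) (filter (\<lambda>i. i \<noteq> 0) is)"
    using Cons.prems(1) by (simp add: sorted_wrt_filter)
  then have "sorted_wrt (<) js"
    unfolding js_def by (auto simp: sorted_wrt_map elim!: sorted_wrt_mono_rel[rotated])
  moreover have "\<forall>i\<in>set js. i < length xs" using Cons.prems(2) unfolding js_def by auto
  ultimately have IH: "nths xs (set js) = map (nth xs) js" by (rule Cons.IH)
  have shift: "map (nth xs) js = map (nth (x#xs)) (filter (\<lambda>i. i \<noteq> 0) is)"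
    unfolding js_def by (auto simp: nth_Cons')
  show ?case
  proof (cases "0 \<in> set is")
    case True
    then obtain r where "is = 0 # r"
      using Cons.prems(1) by (cases "is") (auto simp: not_less_zero)
    moreover from this have "filter (\<lambda>i. i \<noteq> 0) is = r"
      using Cons.prems(1) by (auto intro!: filter_True)
    ultimately show ?thesis using IH shift set_js by (simp add: nths_Cons)
  next
    case False
    then have "filter (\<lambda>i. i \<noteq> 0) is = is" by (metis (mono_tags) filter_True)
    then show ?thesis using False IH shift set_js by (simp add: nths_Cons)
  qed
qed

lemma nths_eq_map_nth_sorted_list_of_set:
  assumes "I \<subseteq> {..<length xs}"
  shows "nths xs I = map (nth xs) (sorted_list_of_set I)"
  using nths_eq_map_nth[of "sorted_list_of_set I" xs] assms finite_subset[OF assms] by auto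

lemma subseq_map_nth:
  assumes "sorted_wrt (<) is" and "\<forall>i\<in>set is. i < length xs"
  shows "subseq (map (nth xs) is) xs"
  by (metis nths_eq_map_nth[OF assms] subseq_conv_nths)

lemma sorted_wrt_less_map:
  assumes "sorted_wrt (<) ts"
    and "\<And>s t. s \<in> set ts \<Longrightarrow> t \<in> set ts \<Longrightarrow> s < t \<Longrightarrow> f s < f t"
  shows "sorted_wrt (<) (map f ts)"
  using assms by (auto simp: sorted_wrt_map elim!: sorted_wrt_mono_rel[rotated])

lemma card_le_card_image_mult:
  assumes "finite S" and "\<And>y. y \<in> f ` S \<Longrightarrow> card {x \<in> S. f x = y} \<le> c"
  shows "card S \<le> card (f ` S) * c"
proof -
  have "card S \<le> card (\<Union>y\<in>f ` S. {x \<in> S. f x = y})"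
    by (intro card_mono) (use assms(1) in auto)
  also have "\<dots> \<le> (\<Sum>y\<in>f ` S. card {x \<in> S. f x = y})"
    by (rule card_UN_le) (use assms(1) in simp)
  also have "\<dots> \<le> card (f ` S) * c"
    using sum_bounded_above[of "f ` S" "\<lambda>y. card {x \<in> S. f x = y}" c] assms(2) by simp
  finally show ?thesis .
qed

text \<open>A monotone lattice path in \<open>{..<n}\<^sup>2\<close> visits at most \<open>2n - 1\<close> points, since
  the sum of the coordinates strictly increases along it.\<close>
lemma card_image_mono_pairs_le:
  fixes a b :: "'a::linorder \<Rightarrow> nat"
  assumes mono: "\<And>s t. s \<in> S \<Longrightarrow> t \<in> S \<Longrightarrow> s \<le> t \<Longrightarrow> a s \<le> a t \<and> b s \<le> b t"
    and bounded: "\<And>t. t \<in> S \<Longrightarrow> a t < n \<and> b t < n"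
  shows "card ((\<lambda>t. (a t, b t)) ` S) \<le> 2 * n - 1"
proof -
  let ?sum = "\<lambda>(x, y). x + y"
  have "inj_on ?sum ((\<lambda>t. (a t, b t)) ` S)"
  proof (rule inj_onI, clarsimp)
    fix s t assume "s \<in> S" "t \<in> S" "a s + b s = a t + b t"
    then show "a s = a t \<and> b s = b t"
      by (cases s t rule: le_cases) (use mono[of s t] mono[of t s] in auto)
  qed
  then have "card ((\<lambda>t. (a t, b t)) ` S) = card (?sum ` (\<lambda>t. (a t, b t)) ` S)"
    by (simp add: card_image)
  also have "\<dots> \<le> card {..<2 * n - 1}"
    by (intro card_mono) (auto dest: bounded)
  finally show ?thesis by simp
qed

lemma finite_twin_cards: "finite {card I | I J. twins w I J}"
proof -
  have "{card I | I J. twins w I J} \<subseteq> {..length w}"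
    unfolding twins_def using card_mono[of "{..<length w}"] by fastforce
  then show ?thesis by (rule finite_subset) simp
qed

lemma card_le_LT_word:
  assumes "twins w I J"
  shows "card I \<le> LT_word w"
  unfolding LT_word_def using assms finite_twin_cards by (intro Max_ge) auto

lemma LT_word_le:
  assumes "\<And>I J. twins w I J \<Longrightarrow> card I \<le> c"
  shows "LT_word w \<le> c"
proof -
  have "twins w {} {}" unfolding twins_def by auto
  then show ?thesis
    unfolding LT_word_def using assms finite_twin_cards by (subst Max_le_iff) auto
qed

lemma length_le_LCS:
  assumes "subseq v p" and "subseq v q"
  shows "length v \<le> LCS p q"
proof -
  have "{length u | u. subseq u p \<and> subseq u q} \<subseteq> {..length p}"
    using list_emb_length by fastforce
  then show ?thesis
    unfolding LCS_def using assms by (intro Max_ge) (auto intro: finite_subset)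
qed

lemma twins_of_sorted_lists:
  assumes "sorted_wrt (<) xs" "sorted_wrt (<) ys" "set xs \<inter> set ys = {}"
    and "\<forall>x\<in>set xs. x < length w" "\<forall>y\<in>set ys. y < length w"
    and "map (nth w) xs = map (nth w) ys"
  shows "twins w (set xs) (set ys)"
  unfolding twins_def using assms nths_eq_map_nth[of xs w] nths_eq_map_nth[of ys w] by auto

lemma nth_concat_equal_length:
  assumes "\<forall>xs\<in>set xss. length xs = k" and "i < k * length xss"
  shows "concat xss ! i = xss ! (i div k) ! (i mod k)"
  using assms
proof (induction xss arbitrary: i)
  case Nil
  then show ?case by simp
next
  case (Cons xs xss)
  show ?case
  proof (cases "i < k")
    case True
    then show ?thesis using Cons.prems by (simp add: nth_append)
  next
    case False
    then have "0 < k" "i div k \<noteq> 0" using Cons.prems by (auto simp: div_eq_0_iff)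
    moreover have "concat xss ! (i - k) = xss ! ((i - k) div k) ! ((i - k) mod k)"
      using Cons False by simp
    ultimately show ?thesis
      using Cons.prems False by (simp add: nth_append nth_Cons' div_if le_mod_geq)
  qed
qed

lemma length_concat_equal_length:
  "\<forall>xs\<in>set xss. length xs = k \<Longrightarrow> length (concat xss) = k * length xss"
  by (induction xss) auto

lemma length_perm: "p \<in> perms k \<Longrightarrow> length p = k"
  unfolding perms_def by (auto dest: distinct_card)


locale perm_substitution =
  fixes k :: nat and P :: "nat \<Rightarrow> nat list" and u :: "nat list"
  assumes perm_P: "\<And>i. i \<in> set u \<Longrightarrow> P i \<in> perms k"
begin

definition word :: "nat list" where
  "word = concat (map P u)"

lemma length_blocks: "\<forall>p\<in>set (map P u). length p = k"
  using perm_P length_perm by auto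

lemma length_word: "length word = k * length u"
  unfolding word_def using length_concat_equal_length[OF length_blocks] by simp

lemma word_in_words: "word \<in> words k (k * length u)"
  using length_word perm_P unfolding words_def word_def perms_def by auto

lemma block_less_length: "x < k * length u \<Longrightarrow> x div k < length u"
  by (simp add: less_mult_imp_div_less mult.commute)

lemma nth_word: "x < k * length u \<Longrightarrow> word ! x = P (u ! (x div k)) ! (x mod k)"
  unfolding word_def using nth_concat_equal_length[OF length_blocks] block_less_length by simp

lemma eq_if_same_block_same_letter:
  assumes "x < k * length u" "y < k * length u" "x div k = y div k" "word ! x = word ! y"
  shows "x = y"
proof -
  let ?p = "P (u ! (x div k))"
  have "?p \<in> perms k" using perm_P block_less_length[OF assms(1)] by simp
  then have "distinct ?p" "length ?p = k" by (auto simp: perms_def length_perm)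
  moreover have "?p ! (x mod k) = ?p ! (y mod k)"
    using assms nth_word by metis
  moreover have "0 < k" using assms(1) by (cases k) auto
  ultimately have "x mod k = y mod k" by (simp add: nth_eq_iff_index_eq)
  then show ?thesis using assms(3) by (metis div_mult_mod_eq)
qed

lemma block_less_if_same_letter:
  assumes "sorted_wrt (<) zs" and "\<forall>z\<in>set zs. z < k * length u"
    and "s < t" "t < length zs" and "word ! (zs ! s) = word ! (zs ! t)"
  shows "zs ! s div k < zs ! t div k"
proof -
  have "zs ! s < zs ! t" using sorted_wrt_nth_less[OF assms(1,3,4)] .
  moreover have "zs ! s < k * length u" "zs ! t < k * length u" using assms(2-4) by auto
  ultimately have "zs ! s div k \<noteq> zs ! t div k"
    using eq_if_same_block_same_letter assms(5) by fastforce
  moreover have "zs ! s div k \<le> zs ! t div k" using \<open>zs ! s < zs ! t\<close> by (simp add: div_le_mono)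
  ultimately show ?thesis by simp
qed

text \<open>The \<open>t\<close>-th positions lie
  in the blocks \<open>xs ! t div k\<close> and \<open>ys ! t div k\<close>; we split the indices \<open>t\<close> according to whether
  these two blocks carry the same letter of \<open>u\<close>.\<close>
context
  fixes xs ys :: "nat list"
  assumes sorted_xs: "sorted_wrt (<) xs" and sorted_ys: "sorted_wrt (<) ys"
    and disjoint: "set xs \<inter> set ys = {}"
    and xs_less: "\<forall>x\<in>set xs. x < length word" and ys_less: "\<forall>y\<in>set ys. y < length word"
    and same_letters: "map (nth word) xs = map (nth word) ys"
begin

lemma length_ys: "length ys = length xs"
  using same_letters by (metis length_map)

lemma nth_xs_less: "t < length xs \<Longrightarrow> xs ! t < k * length u"
  using xs_less length_word by auto

lemma nth_ys_less: "t < length xs \<Longrightarrow> ys ! t < k * length u"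
  using ys_less length_word length_ys by auto

lemma word_nth_xs_eq_nth_ys: "t < length xs \<Longrightarrow> word ! (xs ! t) = word ! (ys ! t)"
  using same_letters length_ys by (metis nth_map)

lemma blocks_mono:
  assumes "s \<le> t" "t < length xs"
  shows "xs ! s div k \<le> xs ! t div k" "ys ! s div k \<le> ys ! t div k"
proof -
  have "sorted xs" "sorted ys"
    using sorted_xs sorted_ys by (auto elim: sorted_wrt_mono_rel[rotated])
  then show "xs ! s div k \<le> xs ! t div k" "ys ! s div k \<le> ys ! t div k"
    using assms length_ys by (auto intro!: div_le_mono sorted_nth_mono)
qed

text \<open>Indices with equal letters in equal blocks of \<open>u\<close> and a fixed letter \<open>c\<close> of \<open>word\<close>
  use each block at most once, so their blocks form twins in \<open>u\<close>.\<close>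
lemma card_same_letter_blocks_le:
  "card {t. t < length xs \<and> u ! (xs ! t div k) = u ! (ys ! t div k) \<and> word ! (xs ! t) = c}
     \<le> LT_word u"
  (is "card ?T \<le> _")
proof -
  define ts where "ts = sorted_list_of_set ?T"
  have set_ts: "set ts = ?T" and sorted_ts: "sorted_wrt (<) ts" and length_ts: "length ts = card ?T"
    unfolding ts_def by auto
  have sorted_a: "sorted_wrt (<) (map (\<lambda>t. xs ! t div k) ts)"
    using sorted_ts set_ts sorted_xs xs_less length_word
    by (intro sorted_wrt_less_map block_less_if_same_letter) auto
  have sorted_b: "sorted_wrt (<) (map (\<lambda>t. ys ! t div k) ts)"
    using sorted_ts set_ts sorted_ys ys_less length_word length_ys word_nth_xs_eq_nth_ys
    by (intro sorted_wrt_less_map block_less_if_same_letter) auto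
  have "xs ! s div k \<noteq> ys ! t div k" if "s \<in> ?T" "t \<in> ?T" for s t
  proof
    assume "xs ! s div k = ys ! t div k"
    moreover have "s < length xs" "t < length xs" "word ! (xs ! s) = word ! (ys ! t)"
      using that word_nth_xs_eq_nth_ys by auto
    ultimately have "xs ! s = ys ! t"
      using eq_if_same_block_same_letter[OF nth_xs_less nth_ys_less] by blast
    moreover have "xs ! s \<in> set xs" "ys ! t \<in> set ys" using that length_ys by auto
    ultimately show False using disjoint by auto
  qed
  then have "set (map (\<lambda>t. xs ! t div k) ts) \<inter> set (map (\<lambda>t. ys ! t div k) ts) = {}"
    using set_ts by auto
  moreover have "map (nth u) (map (\<lambda>t. xs ! t div k) ts) = map (nth u) (map (\<lambda>t. ys ! t div k) ts)"
    using set_ts by auto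
  ultimately have "twins u (set (map (\<lambda>t. xs ! t div k) ts)) (set (map (\<lambda>t. ys ! t div k) ts))"
    using sorted_a sorted_b set_ts nth_xs_less nth_ys_less block_less_length
    by (intro twins_of_sorted_lists) auto
  then have "card (set (map (\<lambda>t. xs ! t div k) ts)) \<le> LT_word u"
    by (rule card_le_LT_word)
  then show ?thesis
    using sorted_a length_ts by (metis distinct_card length_map strict_sorted_iff)
qed

text \<open>Indices whose positions lie in a fixed pair of blocks carrying different letters of \<open>u\<close>
  spell a common subsequence of the two corresponding permutations.\<close>
lemma card_block_pair_le:
  assumes LCS_le: "\<And>i j. i \<in> set u \<Longrightarrow> j \<in> set u \<Longrightarrow> i \<noteq> j \<Longrightarrow> LCS (P i) (P j) \<le> B"
    and different: "u ! a \<noteq> u ! b"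
  shows "card {t. t < length xs \<and> xs ! t div k = a \<and> ys ! t div k = b} \<le> B"
  (is "card ?T \<le> _")
proof (cases "?T = {}")
  case True
  show ?thesis unfolding True by simp
next
  case False
  then obtain t0 where t0: "t0 < length xs" "xs ! t0 div k = a" "ys ! t0 div k = b" by auto
  then have letters_in_u: "u ! a \<in> set u" "u ! b \<in> set u"
    using nth_xs_less nth_ys_less block_less_length by auto
  have "0 < k" using nth_xs_less[OF t0(1)] by (cases k) auto
  define ts where "ts = sorted_list_of_set ?T"
  have set_ts: "set ts = ?T" and sorted_ts: "sorted_wrt (<) ts" and length_ts: "length ts = card ?T"
    unfolding ts_def by auto
  have offsets_increasing: "zs ! s mod k < zs ! t mod k"
    if "sorted_wrt (<) zs" "s < t" "t < length zs" "zs ! s div k = zs ! t div k" for zs s t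
    using sorted_wrt_nth_less[OF that(1-3)] that(4) by (metis div_mult_mod_eq nat_add_left_cancel_less)
  let ?v = "map (\<lambda>t. word ! (xs ! t)) ts"
  have v_a: "?v = map (nth (P (u ! a))) (map (\<lambda>t. xs ! t mod k) ts)"
    using set_ts nth_word[OF nth_xs_less] by auto
  have "sorted_wrt (<) (map (\<lambda>t. xs ! t mod k) ts)"
    using sorted_ts set_ts offsets_increasing[OF sorted_xs] by (intro sorted_wrt_less_map) auto
  then have "subseq ?v (P (u ! a))"
    unfolding v_a
    by (rule subseq_map_nth) (simp add: length_perm[OF perm_P[OF letters_in_u(1)]] \<open>0 < k\<close>)
  have v_b: "?v = map (nth (P (u ! b))) (map (\<lambda>t. ys ! t mod k) ts)"
    using set_ts nth_word[OF nth_ys_less] word_nth_xs_eq_nth_ys by auto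
  have "sorted_wrt (<) (map (\<lambda>t. ys ! t mod k) ts)"
    using sorted_ts set_ts offsets_increasing[OF sorted_ys] length_ys
    by (intro sorted_wrt_less_map) auto
  then have "subseq ?v (P (u ! b))"
    unfolding v_b
    by (rule subseq_map_nth) (simp add: length_perm[OF perm_P[OF letters_in_u(2)]] \<open>0 < k\<close>)
  with \<open>subseq ?v (P (u ! a))\<close> have "length ?v \<le> LCS (P (u ! a)) (P (u ! b))"
    by (rule length_le_LCS)
  also have "\<dots> \<le> B" using LCS_le letters_in_u different .
  finally show ?thesis using length_ts by simp
qed

lemma card_same_letters_le:
  "card {t. t < length xs \<and> u ! (xs ! t div k) = u ! (ys ! t div k)} \<le> k * LT_word u"
  (is "card ?T \<le> _")
proof -
  have "card ?T \<le> card ((\<lambda>t. word ! (xs ! t)) ` ?T) * LT_word u"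
    using card_same_letter_blocks_le by (intro card_le_card_image_mult) (simp_all add: conj_assoc)
  also have "card ((\<lambda>t. word ! (xs ! t)) ` ?T) \<le> card {1..k}"
    using word_in_words xs_less unfolding words_def by (intro card_mono) auto
  finally show ?thesis by simp
qed

lemma card_different_letters_le:
  assumes "\<And>i j. i \<in> set u \<Longrightarrow> j \<in> set u \<Longrightarrow> i \<noteq> j \<Longrightarrow> LCS (P i) (P j) \<le> B"
  shows "card {t. t < length xs \<and> u ! (xs ! t div k) \<noteq> u ! (ys ! t div k)}
    \<le> (2 * length u - 1) * B"
  (is "card ?T \<le> _")
proof -
  let ?blocks = "\<lambda>t. (xs ! t div k, ys ! t div k)"
  have "card ?T \<le> card (?blocks ` ?T) * B"
  proof (rule card_le_card_image_mult)
    fix y assume "y \<in> ?blocks ` ?T"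
    then obtain a b where "y = (a, b)" "u ! a \<noteq> u ! b" by auto
    then have "card {t \<in> ?T. ?blocks t = y}
        \<le> card {t. t < length xs \<and> xs ! t div k = a \<and> ys ! t div k = b}"
      by (intro card_mono) auto
    also have "\<dots> \<le> B" by (rule card_block_pair_le[OF assms \<open>u ! a \<noteq> u ! b\<close>])
    finally show "card {t \<in> ?T. ?blocks t = y} \<le> B" .
  qed simp
  also have "card (?blocks ` ?T) \<le> 2 * length u - 1"
    using blocks_mono nth_xs_less nth_ys_less block_less_length
    by (intro card_image_mono_pairs_le) auto
  finally show ?thesis by simp
qed

lemma length_twin_positions_le:
  assumes "\<And>i j. i \<in> set u \<Longrightarrow> j \<in> set u \<Longrightarrow> i \<noteq> j \<Longrightarrow> LCS (P i) (P j) \<le> B"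
  shows "length xs \<le> (2 * length u - 1) * B + k * LT_word u"
proof -
  let ?D = "{t. t < length xs \<and> u ! (xs ! t div k) \<noteq> u ! (ys ! t div k)}"
  let ?S = "{t. t < length xs \<and> u ! (xs ! t div k) = u ! (ys ! t div k)}"
  have "length xs = card {..<length xs}" by simp
  also have "{..<length xs} = ?D \<union> ?S" by auto
  also have "card (?D \<union> ?S) \<le> card ?D + card ?S" by (rule card_Un_le)
  finally show ?thesis
    using card_different_letters_le[OF assms] card_same_letters_le by linarith
qed

end

lemma LT_word_word_le:
  assumes "\<And>i j. i \<in> set u \<Longrightarrow> j \<in> set u \<Longrightarrow> i \<noteq> j \<Longrightarrow> LCS (P i) (P j) \<le> B"
  shows "LT_word word \<le> (2 * length u - 1) * B + k * LT_word u"
proof (rule LT_word_le)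
  fix I J assume "twins word I J"
  then have I: "I \<subseteq> {..<length word}" and J: "J \<subseteq> {..<length word}"
    and "I \<inter> J = {}" and "nths word I = nths word J"
    unfolding twins_def by auto
  define xs where "xs = sorted_list_of_set I"
  define ys where "ys = sorted_list_of_set J"
  have "finite I" "finite J" using I J finite_subset by auto
  then have "set xs = I" "set ys = J" "sorted_wrt (<) xs" "sorted_wrt (<) ys" "card I = length xs"
    unfolding xs_def ys_def by auto
  moreover have "map (nth word) xs = map (nth word) ys"
    using \<open>nths word I = nths word J\<close> nths_eq_map_nth_sorted_list_of_set[OF I]
      nths_eq_map_nth_sorted_list_of_set[OF J]
    unfolding xs_def ys_def by simp
  ultimately show "card I \<le> (2 * length u - 1) * B + k * LT_word u"
    using length_twin_positions_le[OF _ _ _ _ _ _ assms, of xs ys] I J \<open>I \<inter> J = {}\<close> by auto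
qed

end

lemma LT_attained:
  assumes "LT k n \<le> enat A"
  obtains w where "w \<in> words k n" and "LT_word w \<le> A"
proof -
  have "(\<lambda>w. enat (LT_word w)) ` words k n \<noteq> {}"
    using assms unfolding LT_def by (auto simp: top_enat_def)
  then have "LT k n \<in> (\<lambda>w. enat (LT_word w)) ` words k n"
    unfolding LT_def by (auto intro: wellorder_InfI)
  then show ?thesis using assms that by auto
qed

lemma finite_perms: "finite (perms k)"
proof -
  have "perms k \<subseteq> {xs. set xs \<subseteq> {1..k} \<and> length xs = k}"
    unfolding perms_def by (auto dest: distinct_card)
  then show ?thesis using finite_lists_length_eq[of "{1..k}" k] finite_subset by blast
qed

lemma LCS2_attained:
  assumes "LCS2 K k \<le> enat B"
  obtains P where "\<And>i. i \<in> {1..K} \<Longrightarrow> P i \<in> perms k"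
    and "\<And>i j. i \<in> {1..K} \<Longrightarrow> j \<in> {1..K} \<Longrightarrow> i \<noteq> j \<Longrightarrow> LCS (P i) (P j) \<le> B"
proof -
  let ?max_LCS = "\<lambda>S. Sup {enat (LCS p q) | p q. p \<in> S \<and> q \<in> S \<and> p \<noteq> q}"
  define X where "X = {?max_LCS S | S. S \<subseteq> perms k \<and> card S = K}"
  have LCS2_eq: "LCS2 K k = Inf X" unfolding LCS2_def X_def ..
  have "X \<noteq> {}"
  proof
    assume "X = {}"
    then show False using assms LCS2_eq by (simp add: top_enat_def)
  qed
  then have "Inf X \<in> X" by (auto intro: wellorder_InfI)
  then obtain S where S: "S \<subseteq> perms k" "card S = K" "?max_LCS S \<le> enat B"
    using assms LCS2_eq unfolding X_def by auto
  obtain h where h: "bij_betw h {1..K} S"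
    using ex_bij_betw_nat_finite_1[OF finite_subset[OF S(1) finite_perms]] S(2) by auto
  show ?thesis
  proof
    show "h i \<in> perms k" if "i \<in> {1..K}" for i
      using h S(1) that bij_betwE by blast
    show "LCS (h i) (h j) \<le> B" if "i \<in> {1..K}" "j \<in> {1..K}" "i \<noteq> j" for i j
    proof -
      have "h i \<noteq> h j"
        using that inj_on_eq_iff[OF bij_betw_imp_inj_on[OF h]] by blast
      moreover have "h i \<in> S" "h j \<in> S"
        using h that bij_betwE by blast+
      ultimately
      have "enat (LCS (h i) (h j)) \<le> ?max_LCS S" by (intro Sup_upper) blast
      then have "enat (LCS (h i) (h j)) \<le> enat B" using S(3) by (rule order_trans)
      then show ?thesis by simp
    qed
  qed
qed

theorem lemma21:
  fixes k K A B n :: nat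
  assumes "LT K n \<le> enat A"
    and "LCS2 K k \<le> enat B"
  shows "LT k (k * n) \<le> enat ((2 * n - 1) * B + k * A)"
proof -
  obtain u where u: "u \<in> words K n" and "LT_word u \<le> A"
    using LT_attained[OF assms(1)] .
  obtain P where perm_P: "\<And>i. i \<in> {1..K} \<Longrightarrow> P i \<in> perms k"
    and LCS_P: "\<And>i j. i \<in> {1..K} \<Longrightarrow> j \<in> {1..K} \<Longrightarrow> i \<noteq> j \<Longrightarrow> LCS (P i) (P j) \<le> B"
    using LCS2_attained[OF assms(2)] by blast
  have "set u \<subseteq> {1..K}" "length u = n" using u unfolding words_def by auto
  then interpret perm_substitution k P u
    using perm_P by unfold_locales auto
  have "LT k (k * n) \<le> enat (LT_word word)"
    using word_in_words \<open>length u = n\<close> unfolding LT_def by (auto intro: Inf_lower)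
  also have "LT_word word \<le> (2 * length u - 1) * B + k * LT_word u"
    using \<open>set u \<subseteq> {1..K}\<close> by (intro LT_word_word_le LCS_P) auto
  also have "\<dots> \<le> (2 * n - 1) * B + k * A"
    using \<open>length u = n\<close> \<open>LT_word u \<le> A\<close> by simp
  finally show ?thesis by simp
qed

end
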